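(* Assume $|\mathbb O|\ge 2$. The following are equivalent: (1) for every initial state $x(0)\in\mathbb O^n$, the trajectory $x(t)$ of the PID opinion dynamics almost surely converges to a consensus state (all coordinates equal) in finite time; (2) the only non-empty strictly cohesive subset of $\mathcal V$ is $\mathcal V$ itself.
   Context: Let $n\ge 1$, $\mathcal V=\{1,\dots,n\}$, and let $W=(w_{ij})$ be an $n\times n$ row-stochastic matrix (nonnegative entries, each row summing to $1$). The opinion set is a finite set of consecutive integers $\mathbb O=\{k,k+1,\dots,k+s\}$, and $\theta\in\mathbb O$ is a fixed "truth". For $x\in\mathbb O^n$, $i\in\mathcal V$, $z\in\mathbb O$, define $C^i_{\mathrm{social}}(z;x)=\sum_{j=1}^n w_{ij}|z-x_j|$ and $C^i_{\mathrm{cog}}(z)=|z-\theta|$, and $P_i(x)=\{z\in\mathbb O: C^i_{\mathrm{social}}(z;x)\le C^i_{\mathrm{social}}(x_i;x),\ |z-\theta|\le |x_i-\theta|\}$. PID opinion dynamics: starting from $x(0)$, at each time $t+1$ a node $i$ is chosen uniformly at random from $\mathcal V$ and sets $x_i(t+1)$ to an element chosen at random from $P_i(x(t))$, each element having positive probability; all other nodes keep their opinions. A set $\mathcal M\subseteq\mathcal V$ is strictly cohesive if $\sum_{j\in\mathcal M}w_{ij}>\tfrac12$ for every $i\in\mathcal M$. *)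

theory Defs
  imports "HOL-Probability.Probability"
begin

text \<open>Nodes are 1..n; a state is a function nat => int (only entries on 1..n matter).
  The opinion set is the integer interval {k..k+s}; W is given as nat => nat => real.\<close>

definition row_stochastic :: "nat \<Rightarrow> (nat \<Rightarrow> nat \<Rightarrow> real) \<Rightarrow> bool" where
  "row_stochastic n W \<longleftrightarrow>
     (\<forall>i\<in>{1..n}. \<forall>j\<in>{1..n}. 0 \<le> W i j) \<and> (\<forall>i\<in>{1..n}. (\<Sum>j\<in>{1..n}. W i j) = 1)"

definition C_social :: "nat \<Rightarrow> (nat \<Rightarrow> nat \<Rightarrow> real) \<Rightarrow> nat \<Rightarrow> int \<Rightarrow> (nat \<Rightarrow> int) \<Rightarrow> real" where
  "C_social n W i z x = (\<Sum>j\<in>{1..n}. W i j * real_of_int \<bar>z - x j\<bar>)"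

definition C_cog :: "int \<Rightarrow> int \<Rightarrow> int" where
  "C_cog \<theta> z = \<bar>z - \<theta>\<bar>"

definition P_set :: "nat \<Rightarrow> (nat \<Rightarrow> nat \<Rightarrow> real) \<Rightarrow> int set \<Rightarrow> int \<Rightarrow> nat \<Rightarrow> (nat \<Rightarrow> int) \<Rightarrow> int set" where
  "P_set n W Op \<theta> i x =
     {z \<in> Op. C_social n W i z x \<le> C_social n W i (x i) x \<and> C_cog \<theta> z \<le> C_cog \<theta> (x i)}"

definition strictly_cohesive :: "nat \<Rightarrow> (nat \<Rightarrow> nat \<Rightarrow> real) \<Rightarrow> nat set \<Rightarrow> bool" where
  "strictly_cohesive n W M \<longleftrightarrow> M \<subseteq> {1..n} \<and> (\<forall>i\<in>M. (\<Sum>j\<in>M. W i j) > 1/2)"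

text \<open>The randomness of one update step is a sample r from a (countably supported)
  distribution N; node r is the activated node and sel r x the new opinion it adopts
  when the current state is x.\<close>

definition valid_PID_rand ::
  "nat \<Rightarrow> (nat \<Rightarrow> nat \<Rightarrow> real) \<Rightarrow> int set \<Rightarrow> int \<Rightarrow> 'r pmf \<Rightarrow> ('r \<Rightarrow> nat)
     \<Rightarrow> ('r \<Rightarrow> (nat \<Rightarrow> int) \<Rightarrow> int) \<Rightarrow> bool" where
  "valid_PID_rand n W Op \<theta> N node sel \<longleftrightarrow>
     (\<forall>r\<in>set_pmf N. node r \<in> {1..n}) \<and>
     (\<forall>i\<in>{1..n}. measure_pmf.prob N {r. node r = i} = 1 / real n) \<and>
     (\<forall>x. (\<forall>j\<in>{1..n}. x j \<in> Op) \<longrightarrow>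
        (\<forall>r\<in>set_pmf N. sel r x \<in> P_set n W Op \<theta> (node r) x) \<and>
        (\<forall>i\<in>{1..n}. \<forall>z\<in>P_set n W Op \<theta> i x.
            measure_pmf.prob N {r. node r = i \<and> sel r x = z} > 0))"

primrec traj :: "('r \<Rightarrow> nat) \<Rightarrow> ('r \<Rightarrow> (nat \<Rightarrow> int) \<Rightarrow> int) \<Rightarrow> (nat \<Rightarrow> int)
                   \<Rightarrow> (nat \<Rightarrow> 'r) \<Rightarrow> nat \<Rightarrow> (nat \<Rightarrow> int)" where
  "traj node sel x0 \<omega> 0 = x0"
| "traj node sel x0 \<omega> (Suc t) =
     (let x = traj node sel x0 \<omega> t in x(node (\<omega> t) := sel (\<omega> t) x))"

end

theory Submission
  imports Defs
begin

text \<open>If a proper non-empty set M is strictly cohesive, the state with an opinion a \<noteq> \<theta>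
  on M and \<theta> elsewhere is never left: a node of M would pay more social cost than it
  saves, and a node holding \<theta> cannot move away from the truth. Otherwise, in a state
  without consensus some node holding the extreme opinion farthest from \<theta> puts weight at
  most 1/2 on the nodes sharing it and may move one step towards \<theta>. The total distance to
  \<theta> decreases, so finitely many such moves reach a consensus, which is never left. As only
  finitely many states are reachable, one finite word of updates drives all of them to
  consensus, and almost surely the i.i.d. updates eventually spell out that word.\<close>

section \<open>Words in i.i.d. sequences\<close>

lemma (in prob_space) AE_ex_in_of_indep_vars:
  fixes X :: "nat \<Rightarrow> 'a \<Rightarrow> 'b"
  assumes indep: "indep_vars M' X UNIV"
    and B: "\<And>m. B m \<in> sets (M' m)"
    and q: "\<And>m. prob {\<omega> \<in> space M. X m \<omega> \<in> B m} = q" "q > 0"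
  shows "AE \<omega> in M. \<exists>m. X m \<omega> \<in> B m"
proof -
  define miss where "miss m = X m -` (space (M' m) - B m) \<inter> space M" for m
  have X: "X m \<in> measurable M (M' m)" for m
    using indep by (simp add: indep_vars_def)
  have hit: "{\<omega> \<in> space M. X m \<omega> \<in> B m} \<in> events" for m
    using measurable_sets[OF X B] by (simp add: vimage_def Int_def conj_commute)
  have "miss m = space M - {\<omega> \<in> space M. X m \<omega> \<in> B m}" for m
    using measurable_space[OF X] by (auto simp: miss_def)
  then have miss: "miss m \<in> events" "prob (miss m) = 1 - q" for m
    using hit q(1) by (auto simp: prob_compl)
  have "prob (\<Inter>m<Suc K. miss m) = (1 - q) ^ Suc K" for K
    unfolding miss_def using B by (subst indep_varsD[OF indep]) (auto simp: miss[unfolded miss_def])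
  moreover have "prob (\<Inter>m. miss m) \<le> prob (\<Inter>m<Suc K. miss m)" for K
    using miss by (intro finite_measure_mono) auto
  ultimately have "prob (\<Inter>m. miss m) \<le> (1 - q) ^ Suc K" for K
    by metis
  moreover have "(\<lambda>K. (1 - q) ^ Suc K) \<longlonglongrightarrow> 0"
    using q prob_le_1[of "{\<omega> \<in> space M. X 0 \<omega> \<in> B 0}"]
    by (intro LIMSEQ_Suc LIMSEQ_power_zero) auto
  ultimately have "prob (\<Inter>m. miss m) = 0"
    by (intro antisym LIMSEQ_le_const) auto
  then have "(\<Inter>m. miss m) \<in> null_sets M"
    using miss(1) by (intro null_setsI) (auto simp: emeasure_eq_measure)
  moreover have "{\<omega> \<in> space M. \<not> (\<exists>m. X m \<omega> \<in> B m)} \<subseteq> (\<Inter>m. miss m)"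
    using measurable_space[OF X] by (auto simp: miss_def)
  ultimately show ?thesis
    by (rule AE_I')
qed

lemma (in product_prob_space) indep_vars_components:
  "P.indep_vars M (\<lambda>i \<omega>. \<omega> i) I"
proof (cases "I = {}")
  case False
  have "distr (PiM I M) (PiM I M) (\<lambda>\<omega>. restrict (\<lambda>i. \<omega> i) I)
          = distr (PiM I M) (PiM I M) (\<lambda>\<omega>. \<omega>)"
    by (intro distr_cong) (auto simp: space_PiM PiE_def extensional_restrict)
  also have "\<dots> = PiM I (\<lambda>i. distr (PiM I M) (M i) (\<lambda>\<omega>. \<omega> i))"
    by (simp add: distr_PiM_component prob_space cong: PiM_cong)
  finally show ?thesis
    using False by (subst P.indep_vars_iff_distr_eq_PiM') auto
qed (unfold P.indep_vars_def P.indep_sets_def, simp)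

lemma AE_PiM_pmf_in_set_pmf:
  "AE \<omega> in (\<Pi>\<^sub>M t\<in>(UNIV::nat set). measure_pmf N). \<forall>t. \<omega> t \<in> set_pmf N"
  unfolding AE_all_countable
  by (intro allI AE_PiM_component prob_space_measure_pmf AE_measure_pmf) simp_all

text \<open>Only the aligned blocks {m L..<m L + L} are inspected: being disjoint, they are
  independent, and each spells out u with the same positive probability.\<close>

lemma AE_PiM_pmf_word_occurs:
  fixes N :: "'r pmf" and u :: "'r list"
  assumes u: "set u \<subseteq> set_pmf N"
  shows "AE \<omega> in (\<Pi>\<^sub>M t\<in>(UNIV::nat set). measure_pmf N).
           \<exists>m. \<forall>i<length u. \<omega> (m * length u + i) = u ! i"
proof -
  interpret product_prob_space "\<lambda>_. measure_pmf N" "UNIV :: nat set"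
    by unfold_locales
  let ?P = "\<Pi>\<^sub>M t\<in>(UNIV::nat set). measure_pmf N"
  define L where "L = length u"
  define K where "K m = (\<lambda>i. m * L + i) ` {..<L}" for m
  define B where "B m = (\<Pi>\<^sub>E t\<in>K m. {u ! (t - m * L)})" for m
  have "disjoint_family K"
    unfolding disjoint_family_on_def
  proof (intro ballI impI)
    fix m m' :: nat assume "m \<noteq> m'"
    have "t div L = m" if "t \<in> K m" for t m
      using that by (auto simp: K_def)
    then show "K m \<inter> K m' = {}"
      using \<open>m \<noteq> m'\<close> by blast
  qed
  then have indep: "P.indep_vars (\<lambda>m. \<Pi>\<^sub>M t\<in>K m. measure_pmf N) (\<lambda>m \<omega>. restrict \<omega> (K m)) UNIV"
    using P.indep_vars_restrict[OF indep_vars_components] by simp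
  have B_sets: "B m \<in> sets (\<Pi>\<^sub>M t\<in>K m. measure_pmf N)" for m
    unfolding B_def by (rule sets_PiM_I_finite) (auto simp: K_def)
  have hit_iff: "restrict \<omega> (K m) \<in> B m \<longleftrightarrow> (\<forall>i<L. \<omega> (m * L + i) = u ! i)" for \<omega> m
    by (auto simp: B_def K_def Pi_iff)
  have inj: "inj_on (\<lambda>i. m * L + i) {..<L}" for m
    by (simp add: inj_on_def)
  have "P.prob {\<omega> \<in> space ?P. restrict \<omega> (K m) \<in> B m} = (\<Prod>i<L. pmf N (u ! i))" for m
  proof -
    have "emeasure ?P {\<omega> \<in> space ?P. \<forall>t\<in>K m. \<omega> t \<in> {u ! (t - m * L)}}
            = (\<Prod>t\<in>K m. emeasure N {u ! (t - m * L)})"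
      by (rule emeasure_PiM_Collect) (auto simp: K_def)
    also have "\<dots> = ennreal (\<Prod>i<L. pmf N (u ! i))"
      by (simp add: K_def prod.reindex[OF inj] emeasure_pmf_single prod_ennreal)
    finally show ?thesis
      by (simp add: B_def Pi_iff P.emeasure_eq_measure prod_nonneg)
  qed
  moreover have "(\<Prod>i<L. pmf N (u ! i)) > 0"
    using u by (intro prod_pos) (auto simp: L_def intro!: pmf_positive nth_mem)
  ultimately have "AE \<omega> in ?P. \<exists>m. restrict \<omega> (K m) \<in> B m"
    by (intro P.AE_ex_in_of_indep_vars[OF indep B_sets])
  then show ?thesis
    unfolding hit_iff L_def by simp
qed

section \<open>Absorption of iterated random maps\<close>

lemma fold_map_upt_add:
  "fold f (map \<omega> [0..<t + d]) x
     = fold f (map (\<lambda>j. \<omega> (t + j)) [0..<d]) (fold f (map \<omega> [0..<t]) x)"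
  by (induction d) simp_all

context
  fixes N :: "'r pmf" and f :: "'r \<Rightarrow> 's \<Rightarrow> 's" and S :: "'s set" and A :: "'s \<Rightarrow> bool"
  assumes closed: "\<And>r x. r \<in> set_pmf N \<Longrightarrow> x \<in> S \<Longrightarrow> f r x \<in> S"
    and absorbing: "\<And>r x. r \<in> set_pmf N \<Longrightarrow> x \<in> S \<Longrightarrow> A x \<Longrightarrow> f r x = x"
begin

lemma fold_closed: "set u \<subseteq> set_pmf N \<Longrightarrow> x \<in> S \<Longrightarrow> fold f u x \<in> S"
  by (induction u arbitrary: x) (auto intro: closed)

lemma fold_absorbing: "set u \<subseteq> set_pmf N \<Longrightarrow> x \<in> S \<Longrightarrow> A x \<Longrightarrow> fold f u x = x"
  by (induction u) (auto simp: absorbing)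

lemma ex_word_absorbing_all:
  assumes "finite T" "T \<subseteq> S"
    and reach: "\<And>x. x \<in> S \<Longrightarrow> \<exists>u. set u \<subseteq> set_pmf N \<and> A (fold f u x)"
  shows "\<exists>u. set u \<subseteq> set_pmf N \<and> (\<forall>x\<in>T. A (fold f u x))"
  using assms(1,2)
proof (induction T rule: finite_induct)
  case (insert x T)
  then obtain u where u: "set u \<subseteq> set_pmf N" "\<forall>y\<in>T. A (fold f u y)"
    by blast
  have "fold f u x \<in> S"
    using fold_closed[OF u(1)] insert.prems by simp
  then obtain v where v: "set v \<subseteq> set_pmf N" "A (fold f v (fold f u x))"
    using reach by blast
  have "fold f v (fold f u y) = fold f u y" if "y \<in> T" for y
    using fold_absorbing[OF v(1) fold_closed[OF u(1)]] u(2) insert.prems that by blast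
  then show ?case
    using u v by (intro exI[of _ "u @ v"]) simp
qed (intro exI[of _ "[]"], simp)

lemma fold_absorbed_after_word:
  assumes \<omega>: "\<And>t. \<omega> t \<in> set_pmf N" and "x0 \<in> S"
    and u: "\<forall>x\<in>S. A (fold f u x)" and m: "\<forall>i<length u. \<omega> (m * length u + i) = u ! i"
  defines "X t \<equiv> fold f (map \<omega> [0..<t]) x0"
  shows "\<exists>T. A (X T) \<and> (\<forall>t\<ge>T. X t = X T)"
proof -
  have X_shift: "X (t + d) = fold f (map (\<lambda>j. \<omega> (t + j)) [0..<d]) (X t)" for t d
    unfolding X_def by (rule fold_map_upt_add)
  have word: "set (map (\<lambda>j. \<omega> (t + j)) [0..<d]) \<subseteq> set_pmf N" for t d
    using \<omega> by auto
  have X_in: "X t \<in> S" for t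
    using fold_closed[OF word[of 0 t]] \<open>x0 \<in> S\<close> by (simp add: X_def)
  define T where "T = m * length u + length u"
  have "map (\<lambda>j. \<omega> (m * length u + j)) [0..<length u] = u"
    using m by (intro nth_equalityI) simp_all
  then have "X T = fold f u (X (m * length u))"
    using X_shift[of "m * length u" "length u"] by (simp add: T_def)
  then have absorbed: "A (X T)"
    using u X_in by simp
  moreover have "X t = X T" if "t \<ge> T" for t
  proof -
    have "X t = fold f (map (\<lambda>j. \<omega> (T + j)) [0..<t - T]) (X T)"
      using X_shift[of T "t - T"] that by simp
    then show ?thesis
      using fold_absorbing[OF word X_in absorbed] by simp
  qed
  ultimately show ?thesis
    by blast
qed

lemma AE_fold_eventually_absorbed:
  assumes "finite S" "x0 \<in> S"
    and reach: "\<And>x. x \<in> S \<Longrightarrow> \<exists>u. set u \<subseteq> set_pmf N \<and> A (fold f u x)"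
  shows "AE \<omega> in (\<Pi>\<^sub>M t\<in>(UNIV::nat set). measure_pmf N).
           \<exists>T. A (fold f (map \<omega> [0..<T]) x0) \<and>
               (\<forall>t\<ge>T. fold f (map \<omega> [0..<t]) x0 = fold f (map \<omega> [0..<T]) x0)"
proof -
  obtain u where u: "set u \<subseteq> set_pmf N" "\<forall>x\<in>S. A (fold f u x)"
    using ex_word_absorbing_all[OF assms(1) order_refl reach] by blast
  show ?thesis
    using AE_PiM_pmf_in_set_pmf[of N] AE_PiM_pmf_word_occurs[OF u(1)]
    by eventually_elim (use fold_absorbed_after_word[OF _ \<open>x0 \<in> S\<close> u(2)] in blast)
qed

end

section \<open>PID opinion dynamics\<close>

definition pid_update ::
  "('r \<Rightarrow> nat) \<Rightarrow> ('r \<Rightarrow> (nat \<Rightarrow> int) \<Rightarrow> int) \<Rightarrow> 'r \<Rightarrow> (nat \<Rightarrow> int) \<Rightarrow> (nat \<Rightarrow> int)" where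
  "pid_update node sel r x = x(node r := sel r x)"

lemma traj_eq_fold: "traj node sel x0 \<omega> t = fold (pid_update node sel) (map \<omega> [0..<t]) x0"
  by (induction t) (simp_all add: pid_update_def Let_def)

definition consensus :: "nat \<Rightarrow> (nat \<Rightarrow> int) \<Rightarrow> bool" where
  "consensus n x \<longleftrightarrow> (\<exists>c. \<forall>j\<in>{1..n}. x j = c)"

text \<open>States are total functions on nat; their entries outside the nodes 1..n never
  change, which keeps the set of states reachable from x0 finite.\<close>

definition opinion_states :: "nat \<Rightarrow> int set \<Rightarrow> (nat \<Rightarrow> int) \<Rightarrow> (nat \<Rightarrow> int) set" where
  "opinion_states n Op x0 = {x. (\<forall>j\<in>{1..n}. x j \<in> Op) \<and> (\<forall>j. j \<notin> {1..n} \<longrightarrow> x j = x0 j)}"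

lemma finite_opinion_states:
  assumes "finite Op"
  shows "finite (opinion_states n Op x0)"
proof (rule finite_subset)
  show "opinion_states n Op x0 \<subseteq> (\<lambda>f j. if j \<in> {1..n} then f j else x0 j) ` ({1..n} \<rightarrow>\<^sub>E Op)"
  proof
    fix x assume x: "x \<in> opinion_states n Op x0"
    then have "x = (\<lambda>j. if j \<in> {1..n} then restrict x {1..n} j else x0 j)"
      by (auto simp: opinion_states_def)
    moreover have "restrict x {1..n} \<in> {1..n} \<rightarrow>\<^sub>E Op"
      using x by (auto simp: opinion_states_def)
    ultimately show "x \<in> (\<lambda>f j. if j \<in> {1..n} then f j else x0 j) ` ({1..n} \<rightarrow>\<^sub>E Op)"
      by blast
  qed
qed (use assms in \<open>intro finite_imageI finite_PiE, auto\<close>)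

lemma valid_PID_rand_sel:
  assumes "valid_PID_rand n W Op \<theta> N node sel" "r \<in> set_pmf N" "\<forall>j\<in>{1..n}. x j \<in> Op"
  shows "node r \<in> {1..n}" "sel r x \<in> P_set n W Op \<theta> (node r) x"
  using assms by (auto simp: valid_PID_rand_def)

lemma pid_update_in_opinion_states:
  assumes "valid_PID_rand n W Op \<theta> N node sel" "r \<in> set_pmf N" "x \<in> opinion_states n Op x0"
  shows "pid_update node sel r x \<in> opinion_states n Op x0"
  using valid_PID_rand_sel[OF assms(1,2), of x] assms(3)
  by (auto simp: opinion_states_def pid_update_def P_set_def)

lemma sum_weights_if:
  assumes "row_stochastic n W" "i \<in> {1..n}" "M \<subseteq> {1..n}"
  shows "(\<Sum>j\<in>{1..n}. W i j * (if j \<in> M then a else b))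
           = a * (\<Sum>j\<in>M. W i j) + b * (1 - (\<Sum>j\<in>M. W i j))"
proof -
  have "(\<Sum>j\<in>{1..n}. W i j * (if j \<in> M then a else b))
          = (\<Sum>j\<in>{1..n} - M. W i j * b) + (\<Sum>j\<in>M. W i j * a)"
    using assms(3) by (simp add: sum.subset_diff[of M] if_distrib sum.If_cases Int_absorb1 Diff_eq)
  also have "(\<Sum>j\<in>{1..n} - M. W i j) = 1 - (\<Sum>j\<in>M. W i j)"
    using assms by (simp add: sum_diff row_stochastic_def)
  ultimately show ?thesis
    by (simp add: sum_distrib_right[symmetric])
qed

lemma C_social_diff:
  "C_social n W i z x - C_social n W i y x
     = (\<Sum>j\<in>{1..n}. W i j * real_of_int (\<bar>z - x j\<bar> - \<bar>y - x j\<bar>))"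
  by (simp add: C_social_def sum_subtractf algebra_simps)

text \<open>Deviating by d from the common opinion of the block costs d per unit of weight
  inside the block and saves at most d per unit of weight outside it.\<close>

lemma P_set_cohesive_block:
  assumes rs: "row_stochastic n W" and M: "M \<subseteq> {1..n}" "i \<in> M" "(\<Sum>j\<in>M. W i j) > 1/2"
    and block: "\<And>j. j \<in> M \<Longrightarrow> x j = x i"
  shows "P_set n W Op \<theta> i x \<subseteq> {x i}"
proof
  fix z assume z: "z \<in> P_set n W Op \<theta> i x"
  define d where "d = real_of_int \<bar>z - x i\<bar>"
  have i: "i \<in> {1..n}"
    using M by blast
  have "(\<Sum>j\<in>{1..n}. W i j * (if j \<in> M then d else - d))
          \<le> C_social n W i z x - C_social n W i (x i) x"
    unfolding C_social_diff
  proof (rule sum_mono)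
    fix j assume j: "j \<in> {1..n}"
    have "(if j \<in> M then d else - d) \<le> real_of_int (\<bar>z - x j\<bar> - \<bar>x i - x j\<bar>)"
      using block[of j] by (auto simp: d_def)
    then show "W i j * (if j \<in> M then d else - d) \<le> W i j * real_of_int (\<bar>z - x j\<bar> - \<bar>x i - x j\<bar>)"
      using rs i j by (intro mult_left_mono) (auto simp: row_stochastic_def)
  qed
  also have "\<dots> \<le> 0"
    using z by (simp add: P_set_def)
  finally have "d * (\<Sum>j\<in>M. W i j) - d * (1 - (\<Sum>j\<in>M. W i j)) \<le> 0"
    using sum_weights_if[OF rs i M(1), of d "- d"] by simp
  then have "d * (2 * (\<Sum>j\<in>M. W i j) - 1) \<le> 0"
    by (simp add: algebra_simps)
  then have "d \<le> 0"
    using M(3) by (simp add: mult_le_0_iff)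
  then show "z \<in> {x i}"
    by (simp add: d_def)
qed

lemma pid_update_consensus:
  assumes rs: "row_stochastic n W" and vp: "valid_PID_rand n W Op \<theta> N node sel"
    and "r \<in> set_pmf N" "\<forall>j\<in>{1..n}. x j \<in> Op" "consensus n x"
  shows "pid_update node sel r x = x"
proof -
  note sel = valid_PID_rand_sel[OF vp assms(3,4)]
  have "(\<Sum>j\<in>{1..n}. W (node r) j) > 1/2"
    using rs sel(1) by (simp add: row_stochastic_def)
  moreover have "x j = x (node r)" if "j \<in> {1..n}" for j
    using \<open>consensus n x\<close> sel(1) that by (auto simp: consensus_def)
  ultimately have "P_set n W Op \<theta> (node r) x \<subseteq> {x (node r)}"
    using sel(1) by (intro P_set_cohesive_block[OF rs order_refl])
  then show ?thesis
    using sel(2) by (auto simp: pid_update_def)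
qed

lemma pid_update_cohesive_state:
  assumes rs: "row_stochastic n W" and vp: "valid_PID_rand n W Op \<theta> N node sel"
    and r: "r \<in> set_pmf N" and coh: "strictly_cohesive n W M" and "a \<in> Op" "\<theta> \<in> Op"
  defines "x \<equiv> \<lambda>j. if j \<in> M then a else \<theta>"
  shows "pid_update node sel r x = x"
proof -
  have "\<forall>j\<in>{1..n}. x j \<in> Op"
    using assms by (simp add: x_def)
  note sel = valid_PID_rand_sel[OF vp r this]
  have "sel r x = x (node r)"
  proof (cases "node r \<in> M")
    case True
    then have "P_set n W Op \<theta> (node r) x \<subseteq> {x (node r)}"
      using coh by (intro P_set_cohesive_block[OF rs]) (auto simp: strictly_cohesive_def x_def)
    then show ?thesis
      using sel(2) by auto
  next
    case False
    then show ?thesis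
      using sel(2) by (simp add: P_set_def C_cog_def x_def)
  qed
  then show ?thesis
    by (simp add: pid_update_def)
qed

lemma extreme_opinion:
  fixes \<theta> :: int
  assumes "\<not> consensus n x"
  obtains e m :: int where "e = 1 \<or> e = -1" "m \<in> x ` {1..n}"
    "\<And>j. j \<in> {1..n} \<Longrightarrow> 0 \<le> e * (x j - m)" "0 < e * (\<theta> - m)"
proof (cases "\<exists>j\<in>{1..n}. \<theta> < x j")
  case True
  define m where "m = Max (x ` {1..n})"
  have "x j \<le> m" if "j \<in> {1..n}" for j
    using that unfolding m_def by (intro Max_ge) auto
  moreover have "m \<in> x ` {1..n}"
    using True unfolding m_def by (intro Max_in) auto
  moreover have "\<theta> < m"
    using True calculation(1) by fastforce
  ultimately show thesis
    by (intro that[of "-1" m]) simp_all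
next
  case False
  define m where "m = Min (x ` {1..n})"
  have "m \<le> x j" if "j \<in> {1..n}" for j
    using that unfolding m_def by (intro Min_le) auto
  moreover obtain j0 where "j0 \<in> {1..n}" "x j0 < \<theta>"
  proof -
    have "\<not> (\<forall>j\<in>{1..n}. x j = \<theta>)"
      using assms by (auto simp: consensus_def)
    then obtain j0 where j0: "j0 \<in> {1..n}" "x j0 \<noteq> \<theta>"
      by blast
    moreover have "\<not> \<theta> < x j0"
      using False j0(1) by blast
    ultimately show thesis
      by (intro that[of j0]) auto
  qed
  moreover from this have "m \<in> x ` {1..n}"
    unfolding m_def by (intro Min_in) auto
  moreover have "m < \<theta>"
    using calculation by fastforce
  ultimately show thesis
    by (intro that[of 1 m]) simp_all
qed

text \<open>The nodes holding the extreme opinion m are not strictly cohesive, so one of them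
  puts weight at most 1/2 on them; moving one step from m towards the others and the
  truth does not raise its social cost.\<close>

lemma ex_improving_move:
  assumes rs: "row_stochastic n W" and \<theta>: "\<theta> \<in> {a..b}"
    and no_coh: "\<forall>M. M \<noteq> {} \<and> strictly_cohesive n W M \<longrightarrow> M = {1..n}"
    and x: "\<forall>j\<in>{1..n}. x j \<in> {a..b}" and nc: "\<not> consensus n x"
  shows "\<exists>i\<in>{1..n}. \<exists>z\<in>P_set n W {a..b} \<theta> i x. \<bar>z - \<theta>\<bar> < \<bar>x i - \<theta>\<bar>"
proof -
  obtain e m where e: "e = 1 \<or> e = -1" and m: "m \<in> x ` {1..n}"
    and side: "\<And>j. j \<in> {1..n} \<Longrightarrow> 0 \<le> e * (x j - m)" and \<theta>m: "0 < e * (\<theta> - m)"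
    using extreme_opinion[OF nc, where \<theta> = \<theta>] by metis
  define M where "M = {j\<in>{1..n}. x j = m}"
  have M: "M \<noteq> {}" "M \<subseteq> {1..n}" "M \<noteq> {1..n}"
    using m nc by (auto simp: M_def consensus_def)
  then have "\<not> strictly_cohesive n W M"
    using no_coh by blast
  then obtain i where i: "i \<in> M" and w: "(\<Sum>j\<in>M. W i j) \<le> 1/2"
    using M(2) by (auto simp: strictly_cohesive_def not_less)
  have i': "i \<in> {1..n}" "x i = m"
    using i by (auto simp: M_def)
  have "real_of_int (\<bar>m + e - x j\<bar> - \<bar>x i - x j\<bar>) = (if j \<in> M then 1 else -1)"
    if "j \<in> {1..n}" for j
    using e side[OF that] that i'(2) by (cases "j \<in> M") (auto simp: M_def)
  then have "C_social n W i (m + e) x - C_social n W i (x i) x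
               = (\<Sum>j\<in>{1..n}. W i j * (if j \<in> M then 1 else -1))"
    unfolding C_social_diff by (intro sum.cong) simp_all
  also have "\<dots> \<le> 0"
    using w sum_weights_if[OF rs i'(1) M(2), of 1 "-1"] by simp
  finally have "m + e \<in> P_set n W {a..b} \<theta> i x \<and> \<bar>m + e - \<theta>\<bar> < \<bar>x i - \<theta>\<bar>"
    using e \<theta> \<theta>m m x i'(2) by (auto simp: P_set_def C_cog_def)
  then show ?thesis
    using i'(1) by blast
qed

lemma reach_consensus:
  assumes rs: "row_stochastic n W" and \<theta>: "\<theta> \<in> {a..b}"
    and vp: "valid_PID_rand n W {a..b} \<theta> N node sel"
    and no_coh: "\<forall>M. M \<noteq> {} \<and> strictly_cohesive n W M \<longrightarrow> M = {1..n}"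
  shows "\<forall>j\<in>{1..n}. x j \<in> {a..b} \<Longrightarrow>
           \<exists>u. set u \<subseteq> set_pmf N \<and> consensus n (fold (pid_update node sel) u x)"
proof (induction x rule: measure_induct_rule[where f = "\<lambda>x. \<Sum>j\<in>{1..n}. nat \<bar>x j - \<theta>\<bar>"])
  case (less x)
  show ?case
  proof (cases "consensus n x")
    case True
    then show ?thesis
      by (intro exI[of _ "[]"]) simp
  next
    case False
    obtain i z where i: "i \<in> {1..n}" and z: "z \<in> P_set n W {a..b} \<theta> i x"
      and closer: "\<bar>z - \<theta>\<bar> < \<bar>x i - \<theta>\<bar>"
      using ex_improving_move[OF rs \<theta> no_coh less.prems False] by blast
    have "measure_pmf.prob N {r. node r = i \<and> sel r x = z} > 0"
      using vp less.prems i z by (simp add: valid_PID_rand_def)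
    then obtain r where r: "r \<in> set_pmf N" "node r = i" "sel r x = z"
      using measure_pmf_zero_iff[of N "{r. node r = i \<and> sel r x = z}"] by force
    define x' where "x' = pid_update node sel r x"
    have x': "x' = x(i := z)"
      using r by (simp add: x'_def pid_update_def)
    have "\<forall>j\<in>{1..n}. x' j \<in> {a..b}"
      using z less.prems by (simp add: x' P_set_def)
    moreover have "(\<Sum>j\<in>{1..n}. nat \<bar>x' j - \<theta>\<bar>) < (\<Sum>j\<in>{1..n}. nat \<bar>x j - \<theta>\<bar>)"
      unfolding x' using i closer by (intro sum_strict_mono_ex1) auto
    ultimately obtain u where "set u \<subseteq> set_pmf N" "consensus n (fold (pid_update node sel) u x')"
      using less.IH by blast
    then show ?thesis
      using r(1) by (intro exI[of _ "r # u"]) (simp add: x'_def)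
  qed
qed

lemma AE_traj_consensus:
  assumes rs: "row_stochastic n W" and \<theta>: "\<theta> \<in> {a..b}"
    and vp: "valid_PID_rand n W {a..b} \<theta> N node sel"
    and no_coh: "\<forall>M. M \<noteq> {} \<and> strictly_cohesive n W M \<longrightarrow> M = {1..n}"
    and x0: "\<forall>j\<in>{1..n}. x0 j \<in> {a..b}"
  shows "AE \<omega> in (\<Pi>\<^sub>M t\<in>(UNIV::nat set). measure_pmf N).
           \<exists>T c. \<forall>t\<ge>T. \<forall>j\<in>{1..n}. traj node sel x0 \<omega> t j = c"
proof -
  let ?S = "opinion_states n {a..b} x0"
  let ?X = "\<lambda>\<omega> t. fold (pid_update node sel) (map \<omega> [0..<t]) x0"
  have "AE \<omega> in (\<Pi>\<^sub>M t\<in>(UNIV::nat set). measure_pmf N).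
          \<exists>T. consensus n (?X \<omega> T) \<and> (\<forall>t\<ge>T. ?X \<omega> t = ?X \<omega> T)"
  proof (rule AE_fold_eventually_absorbed[where f = "pid_update node sel" and S = ?S and A = "consensus n"])
    show "pid_update node sel r x \<in> ?S" if "r \<in> set_pmf N" "x \<in> ?S" for r x
      using pid_update_in_opinion_states[OF vp that] .
    show "pid_update node sel r x = x" if "r \<in> set_pmf N" "x \<in> ?S" "consensus n x" for r x
      using pid_update_consensus[OF rs vp] that by (simp add: opinion_states_def)
    show "finite ?S"
      by (rule finite_opinion_states) simp
    show "x0 \<in> ?S"
      using x0 by (simp add: opinion_states_def)
    show "\<exists>u. set u \<subseteq> set_pmf N \<and> consensus n (fold (pid_update node sel) u x)" if "x \<in> ?S" for x
      using reach_consensus[OF rs \<theta> vp no_coh] that by (simp add: opinion_states_def)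
  qed
  then show ?thesis
  proof (rule eventually_mono)
    fix \<omega> assume "\<exists>T. consensus n (?X \<omega> T) \<and> (\<forall>t\<ge>T. ?X \<omega> t = ?X \<omega> T)"
    then obtain T c where const: "\<forall>j\<in>{1..n}. ?X \<omega> T j = c"
      and stay: "\<forall>t\<ge>T. ?X \<omega> t = ?X \<omega> T"
      unfolding consensus_def by blast
    have "traj node sel x0 \<omega> t j = c" if "t \<ge> T" "j \<in> {1..n}" for t j
      using stay[rule_format, OF that(1)] const that(2) by (simp add: traj_eq_fold)
    then show "\<exists>T c. \<forall>t\<ge>T. \<forall>j\<in>{1..n}. traj node sel x0 \<omega> t j = c"
      by (intro exI[of _ T] exI[of _ c]) simp
  qed
qed

lemma AE_traj_stuck:
  fixes N :: "'r pmf"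
  assumes "\<And>r. r \<in> set_pmf N \<Longrightarrow> pid_update node sel r x0 = x0"
  shows "AE \<omega> in (\<Pi>\<^sub>M t\<in>(UNIV::nat set). measure_pmf N). \<forall>t. traj node sel x0 \<omega> t = x0"
  using AE_PiM_pmf_in_set_pmf[of N]
proof (rule eventually_mono)
  fix \<omega> :: "nat \<Rightarrow> 'r" assume "\<forall>t. \<omega> t \<in> set_pmf N"
  then show "\<forall>t. traj node sel x0 \<omega> t = x0"
    using assms by (intro allI, induct_tac t) (simp_all add: pid_update_def)
qed

lemma strictly_cohesive_trivial_of_AE_consensus:
  assumes rs: "row_stochastic n W" and vp: "valid_PID_rand n W Op \<theta> N node sel"
    and a: "a \<in> Op" "a \<noteq> \<theta>" and \<theta>: "\<theta> \<in> Op"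
    and conv: "\<forall>x0. (\<forall>j\<in>{1..n}. x0 j \<in> Op) \<longrightarrow>
                 (AE \<omega> in (\<Pi>\<^sub>M t\<in>(UNIV::nat set). measure_pmf N).
                    \<exists>T c. \<forall>t\<ge>T. \<forall>j\<in>{1..n}. traj node sel x0 \<omega> t j = c)"
    and M: "M \<noteq> {}" "strictly_cohesive n W M"
  shows "M = {1..n}"
proof (rule ccontr)
  interpret prob_space "\<Pi>\<^sub>M t\<in>(UNIV::nat set). measure_pmf N"
    by (intro prob_space_PiM prob_space_measure_pmf)
  assume "M \<noteq> {1..n}"
  moreover have "M \<subseteq> {1..n}"
    using M by (simp add: strictly_cohesive_def)
  ultimately obtain i j where i: "i \<in> M" "i \<in> {1..n}" and j: "j \<in> {1..n}" "j \<notin> M"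
    using M by blast
  define x0 where "x0 = (\<lambda>j. if j \<in> M then a else \<theta>)"
  have "AE \<omega> in (\<Pi>\<^sub>M t\<in>(UNIV::nat set). measure_pmf N). \<forall>t. traj node sel x0 \<omega> t = x0"
    using pid_update_cohesive_state[OF rs vp _ M(2) a(1) \<theta>] unfolding x0_def
    by (intro AE_traj_stuck) blast
  moreover have "AE \<omega> in (\<Pi>\<^sub>M t\<in>(UNIV::nat set). measure_pmf N).
      \<exists>T c. \<forall>t\<ge>T. \<forall>j\<in>{1..n}. traj node sel x0 \<omega> t j = c"
    using conv a(1) \<theta> by (simp add: x0_def)
  ultimately have "AE \<omega> in (\<Pi>\<^sub>M t\<in>(UNIV::nat set). measure_pmf N). False"
  proof eventually_elim
    case (elim \<omega>)
    then obtain T c where "\<forall>j\<in>{1..n}. traj node sel x0 \<omega> T j = c"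
      by blast
    then have "x0 i = x0 j"
      using elim(1) i(2) j(1) by simp
    then show False
      using i(1) j(2) a(2) by (simp add: x0_def)
  qed
  then show False
    by simp
qed

theorem theorem3:
  fixes n :: nat and W :: "nat \<Rightarrow> nat \<Rightarrow> real" and k :: int and s :: nat and \<theta> :: int
    and N :: "'r pmf" and node :: "'r \<Rightarrow> nat" and sel :: "'r \<Rightarrow> (nat \<Rightarrow> int) \<Rightarrow> int"
  assumes "n \<ge> 1"
    and "row_stochastic n W"
    and "s \<ge> 1"
    and "\<theta> \<in> {k..k + int s}"
    and "valid_PID_rand n W {k..k + int s} \<theta> N node sel"
  shows "(\<forall>x0. (\<forall>j\<in>{1..n}. x0 j \<in> {k..k + int s}) \<longrightarrow>
            (AE \<omega> in (\<Pi>\<^sub>M t\<in>(UNIV::nat set). measure_pmf N).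
               \<exists>T c. \<forall>t\<ge>T. \<forall>j\<in>{1..n}. traj node sel x0 \<omega> t j = c))
         \<longleftrightarrow> (\<forall>M. M \<noteq> {} \<and> strictly_cohesive n W M \<longrightarrow> M = {1..n})"
proof -
  note rs = assms(2) and \<theta> = assms(4) and vp = assms(5)
  define a where "a = (if \<theta> = k then k + 1 else k)"
  have a: "a \<in> {k..k + int s}" "a \<noteq> \<theta>"
    using \<theta> \<open>s \<ge> 1\<close> by (auto simp: a_def)
  show ?thesis
    using strictly_cohesive_trivial_of_AE_consensus[OF rs vp a \<theta>] AE_traj_consensus[OF rs \<theta> vp]
    by blast
qed

end
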